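(* Let $\alpha > 1$, $\delta \in [0,1)$, $p, q \in [0,1]$, $P = \mathrm{Ber}(p)$, $Q = \mathrm{Ber}(q)$. Then $$D^\delta_\alpha(P\|Q) = \begin{cases} D_\alpha\!\left(\mathrm{Ber}\!\left(\tfrac{p}{1-\delta}\right) \,\Big\|\, \mathrm{Ber}\!\left(\tfrac{q-\delta}{1-\delta}\right)\right) & \text{if } p < q - \delta,\\[4pt] D_\alpha\!\left(\mathrm{Ber}\!\left(\tfrac{p-\delta}{1-\delta}\right) \,\Big\|\, \mathrm{Ber}\!\left(\tfrac{q}{1-\delta}\right)\right) & \text{if } p > q + \delta,\\[4pt] 0 & \text{if } |p - q| \le \delta.\end{cases}$$ Moreover, for fixed $p$, $q \mapsto D^\delta_\alpha(P\|Q)$ is non-increasing on $[0,p]$ and non-decreasing on $[p,1]$; and for fixed $q$, $p \mapsto D^\delta_\alpha(P\|Q)$ is non-increasing on $[0,q]$ and non-decreasing on $[q,1]$.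
   Context: $\mathrm{Ber}(p)$ is the Bernoulli distribution with success probability $p$. For distributions $P,Q$ on a countable set and $\alpha>1$, $D_\alpha(P\|Q) = \frac{1}{\alpha-1}\log\sum_x P(x)^\alpha Q(x)^{1-\alpha}$ (equal to $\infty$ if $P$ is not absolutely continuous w.r.t. $Q$). The approximate Rényi divergence is $D^\delta_\alpha(P\|Q) = \inf\{D_\alpha(P'\|Q') : P = (1-\delta)P' + \delta P'',\ Q = (1-\delta)Q' + \delta Q''\}$, where the infimum is over probability distributions $P', P'', Q', Q''$ on the same space. *)

theory Defs
  imports "HOL-Probability.Probability"
begin

definition renyi_sum :: "real \<Rightarrow> 'a pmf \<Rightarrow> 'a pmf \<Rightarrow> ennreal" where
  "renyi_sum \<alpha> P Q =
     (\<Sum>\<^sub>\<infinity>x\<in>set_pmf P. ennreal (pmf P x powr \<alpha> * pmf Q x powr (1 - \<alpha>)))"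

definition renyi_div :: "real \<Rightarrow> 'a pmf \<Rightarrow> 'a pmf \<Rightarrow> ereal" where
  "renyi_div \<alpha> P Q =
     (if set_pmf P \<subseteq> set_pmf Q \<and> renyi_sum \<alpha> P Q \<noteq> \<infinity>
      then ereal (ln (enn2real (renyi_sum \<alpha> P Q)) / (\<alpha> - 1))
      else \<infinity>)"

definition approx_renyi_div :: "real \<Rightarrow> real \<Rightarrow> 'a pmf \<Rightarrow> 'a pmf \<Rightarrow> ereal" where
  "approx_renyi_div \<alpha> \<delta> P Q =
     Inf {renyi_div \<alpha> P' Q' | P' P'' Q' Q''.
            (\<forall>x. pmf P x = (1 - \<delta>) * pmf P' x + \<delta> * pmf P'' x) \<and>
            (\<forall>x. pmf Q x = (1 - \<delta>) * pmf Q' x + \<delta> * pmf Q'' x)}"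

end

theory Submission
  imports Defs
begin

text \<open>A decomposition \<open>Ber p = (1 - \<delta>) P' + \<delta> P''\<close> forces \<open>P' = Ber a\<close> with \<open>a\<close> in the
  interval \<open>[(p - \<delta>) / (1 - \<delta>), p / (1 - \<delta>)] \<inter> [0, 1]\<close>, and every such \<open>a\<close> occurs. Hence the
  approximate divergence is the infimum of \<open>D\<^sub>\<alpha>(Ber a \<parallel> Ber b)\<close> over a product of two intervals.
  For \<open>\<alpha> > 1\<close> the sum \<open>a^\<alpha> b^(1 - \<alpha>) + (1 - a)^\<alpha> (1 - b)^(1 - \<alpha>)\<close> equals 1 on the diagonal and
  grows as \<open>a\<close> and \<open>b\<close> move apart (its partial derivatives change sign exactly at \<open>a = b\<close>), so
  \<open>D\<^sub>\<alpha>(Ber a \<parallel> Ber b)\<close> does too. The infimum is therefore 0 when the two intervals meet and is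
  attained at their nearest endpoints otherwise. The reflection \<open>x \<mapsto> 1 - x\<close> exchanges the two
  separated cases, as well as the increasing and decreasing halves of the monotonicity claims.\<close>

definition bernoulli_renyi_sum :: "real \<Rightarrow> real \<Rightarrow> real \<Rightarrow> real" where
  "bernoulli_renyi_sum \<alpha> a b =
     a powr \<alpha> * b powr (1 - \<alpha>) + (1 - a) powr \<alpha> * (1 - b) powr (1 - \<alpha>)"

lemma bernoulli_renyi_sum_reflect:
  "bernoulli_renyi_sum \<alpha> (1 - a) (1 - b) = bernoulli_renyi_sum \<alpha> a b"
  by (simp add: bernoulli_renyi_sum_def)

lemma bernoulli_renyi_sum_same:
  assumes "0 \<le> a" "a \<le> 1"
  shows "bernoulli_renyi_sum \<alpha> a a = 1"
proof -
  have "x powr \<alpha> * x powr (1 - \<alpha>) = x" if "0 \<le> x" for x :: real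
    using that by (cases "x = 0") (simp_all add: powr_add [symmetric])
  then show ?thesis
    using assms by (simp add: bernoulli_renyi_sum_def)
qed

lemma bernoulli_renyi_sum_mono_left:
  assumes "\<alpha> > 1" "0 < b" "b < 1" "b \<le> a1" "a1 \<le> a2" "a2 \<le> 1"
  shows "bernoulli_renyi_sum \<alpha> a1 b \<le> bernoulli_renyi_sum \<alpha> a2 b"
proof -
  let ?f = "\<lambda>x. bernoulli_renyi_sum \<alpha> x b"
  have "\<exists>d. DERIV ?f x :> d \<and> 0 \<le> d" if "a1 < x" "x < a2" for x
  proof -
    have x: "b < x" "x < 1"
      using that assms by auto
    have "DERIV ?f x :> \<alpha> * x powr (\<alpha> - 1) * 1 * b powr (1 - \<alpha>)
        + \<alpha> * (1 - x) powr (\<alpha> - 1) * (- 1) * (1 - b) powr (1 - \<alpha>)"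
      unfolding bernoulli_renyi_sum_def
      by (intro derivative_eq_intros DERIV_fun_powr) (use x assms in auto)
    moreover have ratio: "y powr (\<alpha> - 1) * c powr (1 - \<alpha>) = (y / c) powr (\<alpha> - 1)"
      if "0 < y" "0 < c" for y c :: real
      using that powr_minus_divide [of c "\<alpha> - 1"] by (simp add: powr_divide)
    moreover have "((1 - x) / (1 - b)) powr (\<alpha> - 1) \<le> (x / b) powr (\<alpha> - 1)"
    proof (rule powr_mono2)
      show "(1 - x) / (1 - b) \<le> x / b"
        using x assms by (smt (verit) divide_le_eq_1 le_divide_eq_1)
    qed (use x assms in auto)
    ultimately show ?thesis
      using x assms by (auto simp: mult.assoc ratio)
  qed
  moreover have "continuous_on {a1..a2} ?f"
    unfolding bernoulli_renyi_sum_def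
    using assms by (intro continuous_intros continuous_on_powr') auto
  ultimately show ?thesis
    using DERIV_nonneg_imp_increasing_open [OF \<open>a1 \<le> a2\<close>] by blast
qed

lemma bernoulli_renyi_sum_mono_right:
  assumes "\<alpha> > 1" "0 \<le> a" "a \<le> b1" "b1 \<le> b2" "b2 < 1"
  shows "bernoulli_renyi_sum \<alpha> a b1 \<le> bernoulli_renyi_sum \<alpha> a b2"
proof (cases "a = 0")
  case True
  then show ?thesis
    using assms by (simp add: bernoulli_renyi_sum_def powr_mono2')
next
  case False
  let ?f = "\<lambda>y. bernoulli_renyi_sum \<alpha> a y"
  have "\<exists>d. DERIV ?f y :> d \<and> 0 \<le> d" if "b1 < y" "y < b2" for y
  proof -
    have y: "0 < a" "a \<le> y" "y < 1"
      using that assms False by auto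
    have "DERIV ?f y :> a powr \<alpha> * ((1 - \<alpha>) * y powr (1 - \<alpha> - 1) * 1)
        + (1 - a) powr \<alpha> * ((1 - \<alpha>) * (1 - y) powr (1 - \<alpha> - 1) * (- 1))"
      unfolding bernoulli_renyi_sum_def
      by (intro derivative_eq_intros DERIV_fun_powr) (use y in auto)
    moreover have ratio: "c powr \<alpha> * z powr (- \<alpha>) = (c / z) powr \<alpha>"
      if "0 \<le> c" "0 < z" for c z :: real
      using that powr_minus_divide [of z \<alpha>] by (simp add: powr_divide)
    ultimately have "DERIV ?f y :> (\<alpha> - 1) * (((1 - a) / (1 - y)) powr \<alpha> - (a / y) powr \<alpha>)"
      using y by (simp add: ratio algebra_simps)
    moreover have "(a / y) powr \<alpha> \<le> ((1 - a) / (1 - y)) powr \<alpha>"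
    proof (rule powr_mono2)
      show "a / y \<le> (1 - a) / (1 - y)"
        using y by (smt (verit) divide_le_eq_1 le_divide_eq_1)
    qed (use y assms in auto)
    ultimately show ?thesis
      using assms by auto
  qed
  moreover have "continuous_on {b1..b2} ?f"
    unfolding bernoulli_renyi_sum_def
    using assms False by (intro continuous_intros continuous_on_powr') auto
  ultimately show ?thesis
    using DERIV_nonneg_imp_increasing_open [OF \<open>b1 \<le> b2\<close>] by blast
qed

lemma set_pmf_bernoulli_iff:
  assumes "0 \<le> a" "a \<le> 1"
  shows "x \<in> set_pmf (bernoulli_pmf a) \<longleftrightarrow> (if x then 0 < a else a < 1)"
  using assms by (cases x) (auto simp: set_pmf_eq)

lemma renyi_sum_bernoulli:
  assumes "0 \<le> a" "a \<le> 1" "0 \<le> b" "b \<le> 1"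
  shows "renyi_sum \<alpha> (bernoulli_pmf a) (bernoulli_pmf b) = ennreal (bernoulli_renyi_sum \<alpha> a b)"
proof -
  let ?f = "\<lambda>x. ennreal (pmf (bernoulli_pmf a) x powr \<alpha> * pmf (bernoulli_pmf b) x powr (1 - \<alpha>))"
  have "renyi_sum \<alpha> (bernoulli_pmf a) (bernoulli_pmf b) = (\<Sum>\<^sub>\<infinity>x. ?f x)"
    unfolding renyi_sum_def
    by (rule infsum_cong_neutral) (use assms in \<open>auto simp: set_pmf_eq\<close>)
  also have "\<dots> = ?f True + ?f False"
    by (simp add: UNIV_bool)
  also have "\<dots> = ennreal (bernoulli_renyi_sum \<alpha> a b)"
    using assms unfolding bernoulli_renyi_sum_def by (simp add: ennreal_plus)
  finally show ?thesis .
qed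

lemma renyi_div_bernoulli:
  assumes "0 \<le> a" "a \<le> 1" "0 \<le> b" "b \<le> 1"
  shows "renyi_div \<alpha> (bernoulli_pmf a) (bernoulli_pmf b) =
    (if (0 < a \<longrightarrow> 0 < b) \<and> (a < 1 \<longrightarrow> b < 1)
     then ereal (ln (bernoulli_renyi_sum \<alpha> a b) / (\<alpha> - 1)) else \<infinity>)"
proof -
  have "set_pmf (bernoulli_pmf a) \<subseteq> set_pmf (bernoulli_pmf b) \<longleftrightarrow>
      (0 < a \<longrightarrow> 0 < b) \<and> (a < 1 \<longrightarrow> b < 1)"
    using assms by (simp add: subset_iff set_pmf_bernoulli_iff all_bool_eq)
  moreover have "0 \<le> bernoulli_renyi_sum \<alpha> a b"
    using assms by (simp add: bernoulli_renyi_sum_def)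
  ultimately show ?thesis
    using assms by (simp add: renyi_div_def renyi_sum_bernoulli)
qed

lemma renyi_div_bernoulli_reflect:
  assumes "0 \<le> a" "a \<le> 1" "0 \<le> b" "b \<le> 1"
  shows "renyi_div \<alpha> (bernoulli_pmf (1 - a)) (bernoulli_pmf (1 - b)) =
    renyi_div \<alpha> (bernoulli_pmf a) (bernoulli_pmf b)"
  using assms by (simp add: renyi_div_bernoulli bernoulli_renyi_sum_reflect)

lemma renyi_div_bernoulli_same:
  assumes "0 \<le> a" "a \<le> 1"
  shows "renyi_div \<alpha> (bernoulli_pmf a) (bernoulli_pmf a) = 0"
  using assms by (simp add: renyi_div_bernoulli bernoulli_renyi_sum_same zero_ereal_def)

lemma renyi_div_bernoulli_mono_left:
  assumes "\<alpha> > 1" "0 \<le> b" "b \<le> a1" "a1 \<le> a2" "a2 \<le> 1"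
  shows "renyi_div \<alpha> (bernoulli_pmf a1) (bernoulli_pmf b) \<le>
    renyi_div \<alpha> (bernoulli_pmf a2) (bernoulli_pmf b)"
proof (cases "(0 < a2 \<longrightarrow> 0 < b) \<and> (a2 < 1 \<longrightarrow> b < 1)")
  case False
  then show ?thesis
    using assms by (simp add: renyi_div_bernoulli)
next
  case support: True
  show ?thesis
  proof (cases "0 < b \<and> b < 1")
    case False
    with support assms have "a1 = a2"
      by auto
    then show ?thesis
      by simp
  next
    case True
    then have "1 \<le> bernoulli_renyi_sum \<alpha> a1 b"
      using bernoulli_renyi_sum_mono_left [of \<alpha> b b a1] bernoulli_renyi_sum_same [of b] assms
      by simp
    moreover have "bernoulli_renyi_sum \<alpha> a1 b \<le> bernoulli_renyi_sum \<alpha> a2 b"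
      using bernoulli_renyi_sum_mono_left True assms by blast
    ultimately show ?thesis
      using True assms by (simp add: renyi_div_bernoulli divide_right_mono)
  qed
qed

lemma renyi_div_bernoulli_antimono_left:
  assumes "\<alpha> > 1" "0 \<le> a2" "a2 \<le> a1" "a1 \<le> b" "b \<le> 1"
  shows "renyi_div \<alpha> (bernoulli_pmf a1) (bernoulli_pmf b) \<le>
    renyi_div \<alpha> (bernoulli_pmf a2) (bernoulli_pmf b)"
  using renyi_div_bernoulli_mono_left [of \<alpha> "1 - b" "1 - a1" "1 - a2"] assms
    renyi_div_bernoulli_reflect [of a1 b] renyi_div_bernoulli_reflect [of a2 b]
  by simp

lemma renyi_div_bernoulli_mono_right:
  assumes "\<alpha> > 1" "0 \<le> a" "a \<le> b1" "b1 \<le> b2" "b2 \<le> 1"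
  shows "renyi_div \<alpha> (bernoulli_pmf a) (bernoulli_pmf b1) \<le>
    renyi_div \<alpha> (bernoulli_pmf a) (bernoulli_pmf b2)"
proof (cases "a < 1 \<longrightarrow> b2 < 1")
  case False
  then show ?thesis
    using assms by (simp add: renyi_div_bernoulli)
next
  case support: True
  show ?thesis
  proof (cases "b2 < 1")
    case False
    with support assms have "b1 = b2"
      by auto
    then show ?thesis
      by simp
  next
    case True
    then have "1 \<le> bernoulli_renyi_sum \<alpha> a b1"
      using bernoulli_renyi_sum_mono_right [of \<alpha> a a b1] bernoulli_renyi_sum_same [of a] assms
      by simp
    moreover have "bernoulli_renyi_sum \<alpha> a b1 \<le> bernoulli_renyi_sum \<alpha> a b2"
      using bernoulli_renyi_sum_mono_right True assms by blast
    ultimately show ?thesis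
      using True assms by (simp add: renyi_div_bernoulli divide_right_mono)
  qed
qed

lemma renyi_div_bernoulli_nonneg:
  assumes "\<alpha> > 1" "0 \<le> a" "a \<le> 1" "0 \<le> b" "b \<le> 1"
  shows "0 \<le> renyi_div \<alpha> (bernoulli_pmf a) (bernoulli_pmf b)"
  using renyi_div_bernoulli_mono_left [of \<alpha> b b a] renyi_div_bernoulli_same [of b \<alpha>]
    renyi_div_bernoulli_mono_right [of \<alpha> a a b] renyi_div_bernoulli_same [of a \<alpha>] assms
  by (cases "b \<le> a") auto

lemma renyi_div_bernoulli_closer:
  assumes "\<alpha> > 1" "0 \<le> a" "a \<le> a'" "a' \<le> b'" "b' \<le> b" "b \<le> 1"
  shows "renyi_div \<alpha> (bernoulli_pmf a') (bernoulli_pmf b') \<le>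
    renyi_div \<alpha> (bernoulli_pmf a) (bernoulli_pmf b)"
  using renyi_div_bernoulli_mono_right [of \<alpha> a' b' b]
    renyi_div_bernoulli_antimono_left [of \<alpha> a a' b] assms
  by simp

definition mixture_components :: "real \<Rightarrow> real \<Rightarrow> real set" where
  "mixture_components \<delta> p = {0..1} \<inter> {(p - \<delta>) / (1 - \<delta>) .. p / (1 - \<delta>)}"

lemma mem_mixture_components:
  assumes "\<delta> < 1"
  shows "a \<in> mixture_components \<delta> p \<longleftrightarrow>
    0 \<le> a \<and> a \<le> 1 \<and> (1 - \<delta>) * a \<le> p \<and> p \<le> (1 - \<delta>) * a + \<delta>"
  using assms unfolding mixture_components_def Int_iff atLeastAtMost_iff
  by (auto simp: field_simps)

lemma mixture_components_reflect:
  assumes "\<delta> < 1"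
  shows "a \<in> mixture_components \<delta> (1 - p) \<longleftrightarrow> 1 - a \<in> mixture_components \<delta> p"
  using assms by (auto simp: mem_mixture_components algebra_simps)

lemma bool_pmf_eq_bernoulli: "P = bernoulli_pmf (pmf P True)"
proof (rule pmf_eqI)
  show "pmf P x = pmf (bernoulli_pmf (pmf P True)) x" for x
    by (cases x) (auto simp: pmf_le_1 pmf_False_conv_True)
qed

lemma bernoulli_mixture_iff:
  fixes P :: "bool pmf"
  assumes "0 \<le> \<delta>" "\<delta> < 1" "0 \<le> p" "p \<le> 1"
  shows "(\<exists>R. \<forall>x. pmf (bernoulli_pmf p) x = (1 - \<delta>) * pmf P x + \<delta> * pmf R x) \<longleftrightarrow>
    pmf P True \<in> mixture_components \<delta> p"
proof -
  define a where "a = pmf P True"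
  have a: "0 \<le> a" "a \<le> 1"
    by (simp_all add: a_def pmf_le_1)
  have P: "P = bernoulli_pmf a"
    unfolding a_def by (rule bool_pmf_eq_bernoulli)
  have mem: "a \<in> mixture_components \<delta> p \<longleftrightarrow> (1 - \<delta>) * a \<le> p \<and> p \<le> (1 - \<delta>) * a + \<delta>"
    using a assms by (simp add: mem_mixture_components)
  show ?thesis
    unfolding a_def [symmetric]
  proof
    assume "\<exists>R. \<forall>x. pmf (bernoulli_pmf p) x = (1 - \<delta>) * pmf P x + \<delta> * pmf R x"
    then obtain R where "\<forall>x. pmf (bernoulli_pmf p) x = (1 - \<delta>) * pmf P x + \<delta> * pmf R x"
      by blast
    then have "p = (1 - \<delta>) * a + \<delta> * pmf R True"
      using assms by (auto simp: a_def dest: spec [of _ True])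
    moreover have "0 \<le> \<delta> * pmf R True" "\<delta> * pmf R True \<le> \<delta>"
      using assms pmf_le_1 [of R True] by (simp_all add: mult_left_le)
    ultimately show "a \<in> mixture_components \<delta> p"
      unfolding mem by linarith
  next
    assume "a \<in> mixture_components \<delta> p"
    then have bounds: "(1 - \<delta>) * a \<le> p" "p \<le> (1 - \<delta>) * a + \<delta>"
      by (simp_all add: mem)
    define c where "c = (p - (1 - \<delta>) * a) / \<delta>"
    \<comment> \<open>for \<open>\<delta> = 0\<close> the junk value \<open>c = 0\<close> is harmless, since then \<open>a = p\<close>\<close>
    have c: "0 \<le> c" "c \<le> 1" "\<delta> * c = p - (1 - \<delta>) * a"
      using bounds assms by (auto simp: c_def divide_le_eq)
    have "pmf (bernoulli_pmf p) x = (1 - \<delta>) * pmf P x + \<delta> * pmf (bernoulli_pmf c) x" for x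
      using a c assms by (cases x) (auto simp: P algebra_simps)
    then show "\<exists>R. \<forall>x. pmf (bernoulli_pmf p) x = (1 - \<delta>) * pmf P x + \<delta> * pmf R x"
      by blast
  qed
qed

lemma approx_renyi_div_bernoulli_eq_Inf:
  assumes "0 \<le> \<delta>" "\<delta> < 1" "0 \<le> p" "p \<le> 1" "0 \<le> q" "q \<le> 1"
  shows "approx_renyi_div \<alpha> \<delta> (bernoulli_pmf p) (bernoulli_pmf q) =
    Inf {renyi_div \<alpha> (bernoulli_pmf a) (bernoulli_pmf b) | a b.
           a \<in> mixture_components \<delta> p \<and> b \<in> mixture_components \<delta> q}"
  unfolding approx_renyi_div_def
proof (rule arg_cong [where f = Inf], safe)
  fix P' P'' Q' Q'' :: "bool pmf"
  assume "\<forall>x. pmf (bernoulli_pmf p) x = (1 - \<delta>) * pmf P' x + \<delta> * pmf P'' x"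
    and "\<forall>x. pmf (bernoulli_pmf q) x = (1 - \<delta>) * pmf Q' x + \<delta> * pmf Q'' x"
  then have "pmf P' True \<in> mixture_components \<delta> p" "pmf Q' True \<in> mixture_components \<delta> q"
    using bernoulli_mixture_iff assms by blast+
  then show "\<exists>a b. renyi_div \<alpha> P' Q' = renyi_div \<alpha> (bernoulli_pmf a) (bernoulli_pmf b) \<and>
      a \<in> mixture_components \<delta> p \<and> b \<in> mixture_components \<delta> q"
    using bool_pmf_eq_bernoulli by metis
next
  fix a b
  assume ab: "a \<in> mixture_components \<delta> p" "b \<in> mixture_components \<delta> q"
  then have "0 \<le> a" "a \<le> 1" "0 \<le> b" "b \<le> 1"
    by (auto simp: mixture_components_def)
  then obtain P'' Q'' where
      "\<forall>x. pmf (bernoulli_pmf p) x = (1 - \<delta>) * pmf (bernoulli_pmf a) x + \<delta> * pmf P'' x"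
      "\<forall>x. pmf (bernoulli_pmf q) x = (1 - \<delta>) * pmf (bernoulli_pmf b) x + \<delta> * pmf Q'' x"
    using ab bernoulli_mixture_iff [OF assms(1-4), of "bernoulli_pmf a"]
      bernoulli_mixture_iff [OF assms(1,2,5,6), of "bernoulli_pmf b"]
    by auto
  then show "\<exists>P' P'' Q' Q''. renyi_div \<alpha> (bernoulli_pmf a) (bernoulli_pmf b) = renyi_div \<alpha> P' Q' \<and>
      (\<forall>x. pmf (bernoulli_pmf p) x = (1 - \<delta>) * pmf P' x + \<delta> * pmf P'' x) \<and>
      (\<forall>x. pmf (bernoulli_pmf q) x = (1 - \<delta>) * pmf Q' x + \<delta> * pmf Q'' x)"
    by blast
qed

lemma approx_renyi_div_bernoulli_reflect:
  assumes "0 \<le> \<delta>" "\<delta> < 1" "0 \<le> p" "p \<le> 1" "0 \<le> q" "q \<le> 1"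
  shows "approx_renyi_div \<alpha> \<delta> (bernoulli_pmf (1 - p)) (bernoulli_pmf (1 - q)) =
    approx_renyi_div \<alpha> \<delta> (bernoulli_pmf p) (bernoulli_pmf q)"
proof -
  let ?S = "\<lambda>p q. {renyi_div \<alpha> (bernoulli_pmf a) (bernoulli_pmf b) | a b.
                    a \<in> mixture_components \<delta> p \<and> b \<in> mixture_components \<delta> q}"
  have reflect_subset: "?S (1 - p') (1 - q') \<subseteq> ?S p' q'" for p' q'
  proof safe
    fix a b
    assume "a \<in> mixture_components \<delta> (1 - p')" "b \<in> mixture_components \<delta> (1 - q')"
    then have "1 - a \<in> mixture_components \<delta> p'" "1 - b \<in> mixture_components \<delta> q'"
      and "0 \<le> a" "a \<le> 1" "0 \<le> b" "b \<le> 1"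
      using mixture_components_reflect [OF \<open>\<delta> < 1\<close>] by (auto simp: mixture_components_def)
    then show "\<exists>a' b'. renyi_div \<alpha> (bernoulli_pmf a) (bernoulli_pmf b) =
        renyi_div \<alpha> (bernoulli_pmf a') (bernoulli_pmf b') \<and>
        a' \<in> mixture_components \<delta> p' \<and> b' \<in> mixture_components \<delta> q'"
      using renyi_div_bernoulli_reflect [of a b \<alpha>]
      by (intro exI [of _ "1 - a"] exI [of _ "1 - b"]) auto
  qed
  have "?S (1 - p) (1 - q) = ?S p q"
    using reflect_subset [of p q] reflect_subset [of "1 - p" "1 - q"] by simp
  then show ?thesis
    using assms by (simp add: approx_renyi_div_bernoulli_eq_Inf)
qed

context
  fixes \<alpha> \<delta> :: real
  assumes \<alpha>: "\<alpha> > 1" and \<delta>: "0 \<le> \<delta>" "\<delta> < 1"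
begin

lemma approx_renyi_div_bernoulli_nonneg:
  assumes "0 \<le> p" "p \<le> 1" "0 \<le> q" "q \<le> 1"
  shows "0 \<le> approx_renyi_div \<alpha> \<delta> (bernoulli_pmf p) (bernoulli_pmf q)"
  using assms \<delta>
  by (auto simp: approx_renyi_div_bernoulli_eq_Inf mixture_components_def
      intro!: Inf_greatest renyi_div_bernoulli_nonneg [OF \<alpha>])

lemma approx_renyi_div_bernoulli_below:
  assumes "0 \<le> p" "p < q - \<delta>" "q \<le> 1"
  shows "approx_renyi_div \<alpha> \<delta> (bernoulli_pmf p) (bernoulli_pmf q) =
    renyi_div \<alpha> (bernoulli_pmf (p / (1 - \<delta>))) (bernoulli_pmf ((q - \<delta>) / (1 - \<delta>)))"
proof -
  let ?a = "p / (1 - \<delta>)" and ?b = "(q - \<delta>) / (1 - \<delta>)"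
  have "?a \<in> mixture_components \<delta> p" "?b \<in> mixture_components \<delta> q"
    using assms \<delta> by (auto simp: mixture_components_def divide_le_cancel divide_le_eq_1_pos)
  moreover have "renyi_div \<alpha> (bernoulli_pmf ?a) (bernoulli_pmf ?b) \<le>
      renyi_div \<alpha> (bernoulli_pmf a) (bernoulli_pmf b)"
    if "a \<in> mixture_components \<delta> p" "b \<in> mixture_components \<delta> q" for a b
    using that assms \<delta>
    by (intro renyi_div_bernoulli_closer [OF \<alpha>])
      (auto simp: mixture_components_def divide_le_cancel divide_le_eq_1_pos)
  ultimately show ?thesis
    using assms \<delta> by (auto simp: approx_renyi_div_bernoulli_eq_Inf intro!: cInf_eq_minimum)
qed

lemma approx_renyi_div_bernoulli_above:
  assumes "0 \<le> q" "q + \<delta> < p" "p \<le> 1"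
  shows "approx_renyi_div \<alpha> \<delta> (bernoulli_pmf p) (bernoulli_pmf q) =
    renyi_div \<alpha> (bernoulli_pmf ((p - \<delta>) / (1 - \<delta>))) (bernoulli_pmf (q / (1 - \<delta>)))"
proof -
  have "approx_renyi_div \<alpha> \<delta> (bernoulli_pmf p) (bernoulli_pmf q) =
      approx_renyi_div \<alpha> \<delta> (bernoulli_pmf (1 - p)) (bernoulli_pmf (1 - q))"
    using assms \<delta> by (simp add: approx_renyi_div_bernoulli_reflect)
  also have "\<dots> = renyi_div \<alpha> (bernoulli_pmf ((1 - p) / (1 - \<delta>)))
      (bernoulli_pmf ((1 - q - \<delta>) / (1 - \<delta>)))"
    using assms by (intro approx_renyi_div_bernoulli_below) auto
  also have "\<dots> = renyi_div \<alpha> (bernoulli_pmf (1 - (p - \<delta>) / (1 - \<delta>)))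
      (bernoulli_pmf (1 - q / (1 - \<delta>)))"
    using \<delta> by (simp add: field_simps)
  also have "\<dots> = renyi_div \<alpha> (bernoulli_pmf ((p - \<delta>) / (1 - \<delta>))) (bernoulli_pmf (q / (1 - \<delta>)))"
    using assms \<delta> by (intro renyi_div_bernoulli_reflect) (auto simp: field_simps)
  finally show ?thesis .
qed

lemma approx_renyi_div_bernoulli_close:
  assumes "0 \<le> p" "p \<le> 1" "0 \<le> q" "q \<le> 1" "\<bar>p - q\<bar> \<le> \<delta>"
  shows "approx_renyi_div \<alpha> \<delta> (bernoulli_pmf p) (bernoulli_pmf q) = 0"
proof -
  define t where "t = max 0 (max ((p - \<delta>) / (1 - \<delta>)) ((q - \<delta>) / (1 - \<delta>)))"
  have "t \<in> mixture_components \<delta> p" "t \<in> mixture_components \<delta> q"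
    using assms \<delta> by (auto simp: t_def mixture_components_def divide_le_cancel divide_le_eq_1_pos)
  moreover have "renyi_div \<alpha> (bernoulli_pmf t) (bernoulli_pmf t) = 0"
    using calculation by (intro renyi_div_bernoulli_same) (auto simp: mixture_components_def)
  moreover have "0 \<le> renyi_div \<alpha> (bernoulli_pmf a) (bernoulli_pmf b)"
    if "a \<in> mixture_components \<delta> p" "b \<in> mixture_components \<delta> q" for a b
    using that by (intro renyi_div_bernoulli_nonneg [OF \<alpha>]) (auto simp: mixture_components_def)
  ultimately show ?thesis
    unfolding approx_renyi_div_bernoulli_eq_Inf [OF \<delta> assms(1-4)]
    by (intro cInf_eq_minimum) (force, blast)
qed

lemma approx_renyi_div_bernoulli_mono_right:
  assumes "0 \<le> p" "p \<le> q1" "q1 \<le> q2" "q2 \<le> 1"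
  shows "approx_renyi_div \<alpha> \<delta> (bernoulli_pmf p) (bernoulli_pmf q1) \<le>
    approx_renyi_div \<alpha> \<delta> (bernoulli_pmf p) (bernoulli_pmf q2)"
proof (cases "p < q1 - \<delta>")
  case True
  then show ?thesis
    using assms \<delta>
    by (simp add: approx_renyi_div_bernoulli_below, intro renyi_div_bernoulli_mono_right [OF \<alpha>])
      (auto simp: divide_le_cancel divide_le_eq_1_pos)
next
  case False
  then show ?thesis
    using assms approx_renyi_div_bernoulli_close [of p q1]
      approx_renyi_div_bernoulli_nonneg [of p q2]
    by simp
qed

lemma approx_renyi_div_bernoulli_antimono_right:
  assumes "0 \<le> q2" "q2 \<le> q1" "q1 \<le> p" "p \<le> 1"
  shows "approx_renyi_div \<alpha> \<delta> (bernoulli_pmf p) (bernoulli_pmf q1) \<le>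
    approx_renyi_div \<alpha> \<delta> (bernoulli_pmf p) (bernoulli_pmf q2)"
  using approx_renyi_div_bernoulli_mono_right [of "1 - p" "1 - q1" "1 - q2"] assms \<delta>
  by (simp add: approx_renyi_div_bernoulli_reflect)

lemma approx_renyi_div_bernoulli_antimono_left:
  assumes "0 \<le> p2" "p2 \<le> p1" "p1 \<le> q" "q \<le> 1"
  shows "approx_renyi_div \<alpha> \<delta> (bernoulli_pmf p1) (bernoulli_pmf q) \<le>
    approx_renyi_div \<alpha> \<delta> (bernoulli_pmf p2) (bernoulli_pmf q)"
proof (cases "p1 < q - \<delta>")
  case True
  then show ?thesis
    using assms \<delta>
    by (simp add: approx_renyi_div_bernoulli_below, intro renyi_div_bernoulli_antimono_left [OF \<alpha>])
      (auto simp: divide_le_cancel divide_le_eq_1_pos)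
next
  case False
  then show ?thesis
    using assms approx_renyi_div_bernoulli_close [of p1 q]
      approx_renyi_div_bernoulli_nonneg [of p2 q]
    by simp
qed

lemma approx_renyi_div_bernoulli_mono_left:
  assumes "0 \<le> q" "q \<le> p1" "p1 \<le> p2" "p2 \<le> 1"
  shows "approx_renyi_div \<alpha> \<delta> (bernoulli_pmf p1) (bernoulli_pmf q) \<le>
    approx_renyi_div \<alpha> \<delta> (bernoulli_pmf p2) (bernoulli_pmf q)"
  using approx_renyi_div_bernoulli_antimono_left [of "1 - p2" "1 - p1" "1 - q"] assms \<delta>
  by (simp add: approx_renyi_div_bernoulli_reflect)

end

theorem mainTheorem2:
  fixes \<alpha> \<delta> p q :: real
  assumes "\<alpha> > 1" and "0 \<le> \<delta>" and "\<delta> < 1"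
    and "0 \<le> p" and "p \<le> 1" and "0 \<le> q" and "q \<le> 1"
  shows "approx_renyi_div \<alpha> \<delta> (bernoulli_pmf p) (bernoulli_pmf q) =
           (if p < q - \<delta> then
              renyi_div \<alpha> (bernoulli_pmf (p / (1 - \<delta>))) (bernoulli_pmf ((q - \<delta>) / (1 - \<delta>)))
            else if p > q + \<delta> then
              renyi_div \<alpha> (bernoulli_pmf ((p - \<delta>) / (1 - \<delta>))) (bernoulli_pmf (q / (1 - \<delta>)))
            else 0) \<and>
         antimono_on {0..p} (\<lambda>q'. approx_renyi_div \<alpha> \<delta> (bernoulli_pmf p) (bernoulli_pmf q')) \<and>
         mono_on {p..1} (\<lambda>q'. approx_renyi_div \<alpha> \<delta> (bernoulli_pmf p) (bernoulli_pmf q')) \<and>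
         antimono_on {0..q} (\<lambda>p'. approx_renyi_div \<alpha> \<delta> (bernoulli_pmf p') (bernoulli_pmf q)) \<and>
         mono_on {q..1} (\<lambda>p'. approx_renyi_div \<alpha> \<delta> (bernoulli_pmf p') (bernoulli_pmf q))"
proof (intro conjI)
  note approx = approx_renyi_div_bernoulli_below [OF assms(1-3)]
    approx_renyi_div_bernoulli_above [OF assms(1-3)]
    approx_renyi_div_bernoulli_close [OF assms(1-3)]
  show "approx_renyi_div \<alpha> \<delta> (bernoulli_pmf p) (bernoulli_pmf q) =
           (if p < q - \<delta> then
              renyi_div \<alpha> (bernoulli_pmf (p / (1 - \<delta>))) (bernoulli_pmf ((q - \<delta>) / (1 - \<delta>)))
            else if p > q + \<delta> then
              renyi_div \<alpha> (bernoulli_pmf ((p - \<delta>) / (1 - \<delta>))) (bernoulli_pmf (q / (1 - \<delta>)))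
            else 0)"
    using assms approx by auto
  show "antimono_on {0..p} (\<lambda>q'. approx_renyi_div \<alpha> \<delta> (bernoulli_pmf p) (bernoulli_pmf q'))"
    using assms by (intro monotone_onI approx_renyi_div_bernoulli_antimono_right) auto
  show "mono_on {p..1} (\<lambda>q'. approx_renyi_div \<alpha> \<delta> (bernoulli_pmf p) (bernoulli_pmf q'))"
    using assms by (intro monotone_onI approx_renyi_div_bernoulli_mono_right) auto
  show "antimono_on {0..q} (\<lambda>p'. approx_renyi_div \<alpha> \<delta> (bernoulli_pmf p') (bernoulli_pmf q))"
    using assms by (intro monotone_onI approx_renyi_div_bernoulli_antimono_left) auto
  show "mono_on {q..1} (\<lambda>p'. approx_renyi_div \<alpha> \<delta> (bernoulli_pmf p') (bernoulli_pmf q))"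
    using assms by (intro monotone_onI approx_renyi_div_bernoulli_mono_left) auto
qed

end
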